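(* Let $z^0\in X$, $\gamma\in(0,2)$, $\delta\in[0,1/2)$, and let $\{\sigma_k\},\{\eta_k\}$ be nonnegative with $\sum_k\eta_k<\infty$, $\inf_k\sigma_k>0$; let $z^{k+1}$ be an output of IGPPAstep$(z^k,\sigma_k,\eta_k,\delta,\gamma,M)$ for all $k\ge0$. Assume $T$ satisfies the bounded metric subregularity condition, let $\bar z^0$ be a point of $\Omega$ nearest to $z^0$ in $\|\cdot\|_M$, let $r\ge\|\bar z^0\|+\frac{1}{\lambda_{\min}(M)}(\operatorname{dist}_M(z^0,\Omega)+\gamma\sum_k\eta_k)$ and $\kappa_r>0$ with $\operatorname{dist}(z,\Omega)\le\kappa_r\operatorname{dist}(0,T(z))$ for $\|z\|\le r$. Then for every $k\ge0$, $$\frac{1-\delta}{\gamma}\|z^{k+1}-z^k\|_M\le\operatorname{dist}_M(z^k,\Omega)\le\frac{1+\delta}{\gamma\Big(1-\sqrt{\frac{\kappa_r^2}{\sigma_k^2+\kappa_r^2}}\Big)}\|z^{k+1}-z^k\|_M.$$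
   Context: $X$ is a finite-dimensional real Hilbert space; $T:X\rightrightarrows X$ is maximal monotone with $\Omega:=T^{-1}(0)\neq\emptyset$. $M$ is self-adjoint positive definite with $\lambda_{\max}(M)=1$; $\|z\|_M=\sqrt{\langle z,Mz\rangle}$, $\operatorname{dist}_M(z,D)=\min_{d\in D}\|d-z\|_M$, $\operatorname{dist}=\operatorname{dist}_I$. $\mathcal{J}_{\sigma M^{-1}T}:=(I+\sigma M^{-1}T)^{-1}$. $z^+$ is an output of IGPPAstep$(z,\sigma,\eta,\delta,\gamma,M)$ if $z^+=\gamma w+(1-\gamma)z$ for some $w$ with $\|w-\mathcal{J}_{\sigma M^{-1}T}(z)\|_M\le\min\{\eta,\delta\|w-z\|_M\}$. Bounded metric subregularity: for every $r>0$ there is $\kappa_r>0$ with $\operatorname{dist}(z,\Omega)\le\kappa_r\operatorname{dist}(0,T(z))$ for all $\|z\|\le r$. *)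

theory Defs
  imports "HOL-Analysis.Analysis"
begin

definition monotone_op :: "('a::real_inner \<Rightarrow> 'a set) \<Rightarrow> bool" where
  "monotone_op T \<longleftrightarrow> (\<forall>x y u v. u \<in> T x \<longrightarrow> v \<in> T y \<longrightarrow> 0 \<le> (x - y) \<bullet> (u - v))"

definition maximal_monotone :: "('a::real_inner \<Rightarrow> 'a set) \<Rightarrow> bool" where
  "maximal_monotone T \<longleftrightarrow> monotone_op T \<and>
     (\<forall>S. monotone_op S \<and> (\<forall>x. T x \<subseteq> S x) \<longrightarrow> S = T)"

definition self_adjoint :: "('a::real_inner \<Rightarrow> 'a) \<Rightarrow> bool" where
  "self_adjoint M \<longleftrightarrow> (\<forall>x y. M x \<bullet> y = x \<bullet> M y)"

definition pos_def :: "('a::real_inner \<Rightarrow> 'a) \<Rightarrow> bool" where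
  "pos_def M \<longleftrightarrow> (\<forall>x. x \<noteq> 0 \<longrightarrow> 0 < x \<bullet> M x)"

definition lambda_max :: "('a::real_inner \<Rightarrow> 'a) \<Rightarrow> real" where
  "lambda_max M = Sup {x \<bullet> M x | x. norm x = 1}"

definition lambda_min :: "('a::real_inner \<Rightarrow> 'a) \<Rightarrow> real" where
  "lambda_min M = Inf {x \<bullet> M x | x. norm x = 1}"

definition normM :: "('a::real_inner \<Rightarrow> 'a) \<Rightarrow> 'a \<Rightarrow> real" where
  "normM M z = sqrt (z \<bullet> M z)"

definition distM :: "('a::real_inner \<Rightarrow> 'a) \<Rightarrow> 'a \<Rightarrow> 'a set \<Rightarrow> real" where
  "distM M z D = Inf {normM M (d - z) | d. d \<in> D}"

text \<open>Resolvent (I + \<sigma> M^{-1} T)^{-1}: w = J(z) iff z \<in> w + \<sigma> M^{-1} T(w),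
  i.e. M (z - w) \<in> \<sigma> T(w).\<close>

definition resolventM :: "real \<Rightarrow> ('a::real_inner \<Rightarrow> 'a) \<Rightarrow> ('a \<Rightarrow> 'a set) \<Rightarrow> 'a \<Rightarrow> 'a" where
  "resolventM \<sigma> M T z = (THE w. M (z - w) \<in> (\<lambda>v. \<sigma> *\<^sub>R v) ` T w)"

definition IGPPAstep_out ::
  "('a::real_inner \<Rightarrow> 'a set) \<Rightarrow> 'a \<Rightarrow> real \<Rightarrow> real \<Rightarrow> real \<Rightarrow> real \<Rightarrow> ('a \<Rightarrow> 'a) \<Rightarrow> 'a \<Rightarrow> bool" where
  "IGPPAstep_out T z \<sigma> \<eta> \<delta> \<gamma> M zplus \<longleftrightarrow>
     (\<exists>w. zplus = \<gamma> *\<^sub>R w + (1 - \<gamma>) *\<^sub>R z \<and>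
          normM M (w - resolventM \<sigma> M T z) \<le> min \<eta> (\<delta> * normM M (w - z)))"

text \<open>dist(0, T z) is +\<infinity> when T z = {}; the inequality is then vacuous.\<close>

definition subreg_bound :: "('a::real_inner \<Rightarrow> 'a set) \<Rightarrow> real \<Rightarrow> real \<Rightarrow> bool" where
  "subreg_bound T r \<kappa> \<longleftrightarrow> (\<forall>z. norm z \<le> r \<longrightarrow> T z \<noteq> {} \<longrightarrow>
      infdist z {x. 0 \<in> T x} \<le> \<kappa> * infdist 0 (T z))"

definition bounded_metric_subregular :: "('a::real_inner \<Rightarrow> 'a set) \<Rightarrow> bool" where
  "bounded_metric_subregular T \<longleftrightarrow> (\<forall>r>0. \<exists>\<kappa>>0. subreg_bound T r \<kappa>)"

end

theory Submission
  imports Defs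
begin

(* Let J be the exact resolvent point of z. Since M (z - J) lies in sigma T(J), monotonicity
   against any zero p of T gives <J - p, M (z - J)> >= 0. This yields
   ||z - J||_M <= dist_M(z, Omega) and makes the relaxed step z + gamma (J - z), 0 <= gamma <= 2,
   Fejer monotone in the M-norm; summing the errors eta_k, every resolvent point stays in the
   ball of radius r. There subregularity gives dist(J, Omega) <= (kappa/sigma) ||z - J||_M,
   hence dist_M(z, Omega) <= (1 + kappa/sigma) ||z - J||_M, and
   1 + kappa/sigma <= 1/(1 - kappa/sqrt(sigma^2 + kappa^2)). Both estimates follow because the
   inexact point w satisfies (1 - delta) ||w - z||_M <= ||J - z||_M <= (1 + delta) ||w - z||_M.
   The resolvent is well defined by Minty's theorem, obtained from Brouwer's fixed point
   theorem through the Debrunner-Flor lemma. *)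

lemma maximal_monotone_memI:
  fixes T :: "'a::real_inner \<Rightarrow> 'a set"
  assumes mm: "maximal_monotone T"
    and h: "\<And>x u. u \<in> T x \<Longrightarrow> 0 \<le> (w - x) \<bullet> (v - u)"
  shows "v \<in> T w"
proof -
  define S where "S = T(w := insert v (T w))"
  have h': "0 \<le> (x - w) \<bullet> (u - v)" if "u \<in> T x" for x u
    using h[OF that] by (simp add: inner_diff_left inner_diff_right algebra_simps)
  have "monotone_op T" using mm by (simp add: maximal_monotone_def)
  then have "monotone_op S"
    using h h' unfolding monotone_op_def S_def by (auto split: if_splits)
  moreover have "\<forall>x. T x \<subseteq> S x" by (auto simp: S_def)
  ultimately have "S = T" using mm by (simp add: maximal_monotone_def)
  then show ?thesis by (metis S_def fun_upd_same insertI1)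
qed

lemma maximal_monotone_graph_nonempty:
  fixes T :: "'a::real_inner \<Rightarrow> 'a set"
  assumes "maximal_monotone T"
  shows "\<exists>x u. u \<in> T x"
proof (rule ccontr)
  assume empty: "\<nexists>x u. u \<in> T x"
  then have "0 \<in> T 0" by (intro maximal_monotone_memI[OF assms]) auto
  with empty show False by blast
qed

lemma closed_zeros_maximal_monotone:
  fixes T :: "'a::real_inner \<Rightarrow> 'a set"
  assumes mm: "maximal_monotone T"
  shows "closed {x. 0 \<in> T x}"
proof -
  have "{x. 0 \<in> T x} = (\<Inter>g\<in>{(y, u). u \<in> T y}. {x. 0 \<le> (x - fst g) \<bullet> (0 - snd g)})"
  proof (intro equalityI subsetI)
    fix x assume "x \<in> {x. 0 \<in> T x}"
    then show "x \<in> (\<Inter>g\<in>{(y, u). u \<in> T y}. {x. 0 \<le> (x - fst g) \<bullet> (0 - snd g)})"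
      using mm unfolding maximal_monotone_def monotone_op_def by fastforce
  next
    fix x assume "x \<in> (\<Inter>g\<in>{(y, u). u \<in> T y}. {x. 0 \<le> (x - fst g) \<bullet> (0 - snd g)})"
    then have "0 \<in> T x" by (intro maximal_monotone_memI[OF mm]) force
    then show "x \<in> {x. 0 \<in> T x}" by simp
  qed
  also have "closed \<dots>"
    by (intro closed_INT ballI closed_Collect_le continuous_intros)
  finally show ?thesis .
qed

lemma convex_combination_monotone_inner_nonneg:
  fixes G :: "('a::real_inner \<times> 'a) set"
  assumes fin: "finite G"
    and mono: "\<And>g j. g \<in> G \<Longrightarrow> j \<in> G \<Longrightarrow> 0 \<le> (fst g - fst j) \<bullet> (snd g - snd j)"
    and \<beta>: "\<And>g. g \<in> G \<Longrightarrow> 0 \<le> \<beta> g" "sum \<beta> G = 1"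
    and w: "w = (\<Sum>g\<in>G. \<beta> g *\<^sub>R fst g)"
  shows "0 \<le> (\<Sum>g\<in>G. \<beta> g * ((w - fst g) \<bullet> (y - snd g)))"
proof -
  define S where "S = (\<Sum>g\<in>G. \<Sum>j\<in>G. \<beta> g * \<beta> j * ((fst g - fst j) \<bullet> snd g))"
  have centre: "(\<Sum>g\<in>G. \<beta> g *\<^sub>R (w - fst g)) = 0"
    using \<beta>(2) w by (simp add: scaleR_diff_right sum_subtractf scaleR_sum_left[symmetric])
  have spread: "fst g - w = (\<Sum>j\<in>G. \<beta> j *\<^sub>R (fst g - fst j))" for g :: "'a \<times> 'a"
    using \<beta>(2) w by (simp add: scaleR_diff_right sum_subtractf scaleR_sum_left[symmetric])
  have "(\<Sum>g\<in>G. \<beta> g * ((w - fst g) \<bullet> (y - snd g)))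
      = (\<Sum>g\<in>G. \<beta> g *\<^sub>R (w - fst g)) \<bullet> y + (\<Sum>g\<in>G. \<beta> g * ((fst g - w) \<bullet> snd g))"
    by (simp add: inner_sum_left sum.distrib[symmetric] inner_diff_left inner_diff_right
        algebra_simps)
  also have "\<dots> = S"
    unfolding centre S_def by (subst spread) (simp add: inner_sum_left sum_distrib_left mult.assoc)
  finally have sum_eq: "(\<Sum>g\<in>G. \<beta> g * ((w - fst g) \<bullet> (y - snd g))) = S" .
  have "S = (\<Sum>g\<in>G. \<Sum>j\<in>G. \<beta> g * \<beta> j * ((fst j - fst g) \<bullet> snd j))"
    unfolding S_def by (subst sum.swap) (simp add: mult.commute)
  then have "2 * S = (\<Sum>g\<in>G. \<Sum>j\<in>G. \<beta> g * \<beta> j * ((fst g - fst j) \<bullet> snd g)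
                                      + \<beta> g * \<beta> j * ((fst j - fst g) \<bullet> snd j))"
    by (simp add: S_def sum.distrib)
  also have "\<dots> = (\<Sum>g\<in>G. \<Sum>j\<in>G. \<beta> g * \<beta> j * ((fst g - fst j) \<bullet> (snd g - snd j)))"
    by (intro sum.cong refl) (simp add: inner_diff_left inner_diff_right algebra_simps)
  also have "\<dots> \<ge> 0"
    using mono \<beta>(1) by (intro sum_nonneg) simp
  finally show ?thesis using sum_eq by simp
qed

lemma brouwer_weighted_barycentre:
  fixes x :: "'i \<Rightarrow> 'a::euclidean_space"
  assumes fin: "finite I" and ne: "I \<noteq> {}"
    and cont: "\<And>i. i \<in> I \<Longrightarrow> continuous_on (convex hull (x ` I)) (m i)"
    and nonneg: "\<And>i w. i \<in> I \<Longrightarrow> 0 \<le> m i w"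
    and pos: "\<And>w. w \<in> convex hull (x ` I) \<Longrightarrow> 0 < (\<Sum>i\<in>I. m i w)"
  obtains w where "w \<in> convex hull (x ` I)"
    and "w = (\<Sum>i\<in>I. (m i w / (\<Sum>j\<in>I. m j w)) *\<^sub>R x i)"
proof -
  define C where "C = convex hull (x ` I)"
  define p where "p w = (\<Sum>i\<in>I. (m i w / (\<Sum>j\<in>I. m j w)) *\<^sub>R x i)" for w
  have C: "compact C" "convex C" "C \<noteq> {}"
    using fin ne by (auto simp: C_def finite_imp_compact_convex_hull)
  have "continuous_on C p"
    unfolding p_def using pos[folded C_def] cont[folded C_def]
    by (intro continuous_on_sum continuous_on_scaleR continuous_on_divide continuous_on_const)
       force+
  moreover have "p \<in> C \<rightarrow> C"
  proof
    fix w assume "w \<in> C"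
    then have N: "0 < (\<Sum>j\<in>I. m j w)" unfolding C_def by (rule pos)
    then have "(\<Sum>i\<in>I. m i w / (\<Sum>j\<in>I. m j w)) = 1"
      by (simp add: sum_divide_distrib[symmetric])
    then show "p w \<in> C" unfolding p_def
      by (rule convex_sum[OF fin C(2)]) (use N nonneg in \<open>auto simp: C_def hull_inc\<close>)
  qed
  ultimately obtain w where "w \<in> C" "p w = w" using brouwer[OF C] by blast
  then show ?thesis using that by (simp add: C_def p_def)
qed

lemma debrunner_flor_finite:
  fixes G :: "('a::euclidean_space \<times> 'a) set" and \<phi> :: "'a \<Rightarrow> 'a"
  assumes fin: "finite G" and ne: "G \<noteq> {}"
    and mono: "\<And>g j. g \<in> G \<Longrightarrow> j \<in> G \<Longrightarrow> 0 \<le> (fst g - fst j) \<bullet> (snd g - snd j)"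
    and cont: "continuous_on (convex hull (fst ` G)) \<phi>"
  shows "\<exists>w \<in> convex hull (fst ` G). \<forall>g\<in>G. 0 \<le> (w - fst g) \<bullet> (\<phi> w - snd g)"
proof (rule ccontr)
  define h where "h g w = (w - fst g) \<bullet> (\<phi> w - snd g)" for g w
  define m where "m g w = max 0 (- h g w)" for g w
  (* Weighting the points of G by their violations, a fixed point of the barycentre map
     contradicts convex_combination_monotone_inner_nonneg. *)
  assume "\<not> ?thesis"
  then have violated: "\<exists>g\<in>G. h g w < 0" if "w \<in> convex hull (fst ` G)" for w
    using that unfolding h_def by (meson not_le)
  have pos: "0 < (\<Sum>g\<in>G. m g w)" if w: "w \<in> convex hull (fst ` G)" for w
  proof -
    obtain g where g: "g \<in> G" "h g w < 0" using violated[OF w] by blast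
    then have "0 < m g w" by (simp add: m_def)
    also have "m g w \<le> (\<Sum>g\<in>G. m g w)" using g fin by (intro member_le_sum) (auto simp: m_def)
    finally show ?thesis .
  qed
  have cont_m: "continuous_on (convex hull (fst ` G)) (m g)" for g
    unfolding m_def h_def using cont by (intro continuous_intros) auto
  obtain w0 where w0: "w0 \<in> convex hull (fst ` G)"
    "w0 = (\<Sum>g\<in>G. (m g w0 / (\<Sum>j\<in>G. m j w0)) *\<^sub>R fst g)"
    by (rule brouwer_weighted_barycentre[of G fst m, OF fin ne cont_m _ pos]) (auto simp: m_def)
  define \<beta> where "\<beta> g = m g w0 / (\<Sum>j\<in>G. m j w0)" for g
  have N: "0 < (\<Sum>j\<in>G. m j w0)" by (rule pos[OF w0(1)])
  have "0 \<le> (\<Sum>g\<in>G. \<beta> g * h g w0)"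
    unfolding h_def
    by (rule convex_combination_monotone_inner_nonneg[OF fin mono])
       (use N w0(2) in \<open>auto simp: \<beta>_def m_def sum_divide_distrib[symmetric]\<close>)
  moreover have "(\<Sum>g\<in>G. \<beta> g * h g w0) < (\<Sum>g\<in>G. 0)"
  proof (rule sum_strict_mono_ex1[OF fin])
    show "\<forall>g\<in>G. \<beta> g * h g w0 \<le> 0"
      using N by (auto simp: \<beta>_def m_def mult_le_0_iff max_def)
    obtain g where g: "g \<in> G" "h g w0 < 0" using violated[OF w0(1)] by blast
    then have "0 < \<beta> g" using N by (simp add: \<beta>_def m_def divide_neg_pos)
    then show "\<exists>g\<in>G. \<beta> g * h g w0 < 0" using g by (meson mult_pos_neg)
  qed
  ultimately show False by simp
qed

lemma maximal_monotone_meets_continuous: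
  fixes T :: "'a::euclidean_space \<Rightarrow> 'a set"
  assumes mm: "maximal_monotone T" and cont: "continuous_on UNIV \<phi>"
    and u0: "u0 \<in> T x0" and bnd: "bounded {w. 0 \<le> (w - x0) \<bullet> (\<phi> w - u0)}"
  shows "\<exists>w. \<phi> w \<in> T w"
proof -
  define Gr where "Gr = {(x, u). u \<in> T x}"
  define K where "K g = {w. 0 \<le> (w - fst g) \<bullet> (\<phi> w - snd g)}" for g
  have mT: "monotone_op T" using mm by (simp add: maximal_monotone_def)
  have closed_K: "closed (K g)" for g
    unfolding K_def by (intro closed_Collect_le continuous_intros continuous_on_subset[OF cont]) auto
  have "compact (K (x0, u0))"
    using bnd closed_K[of "(x0, u0)"] by (simp add: K_def compact_eq_bounded_closed)
  then have "K (x0, u0) \<inter> (\<Inter>g\<in>Gr. K g) \<noteq> {}"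
  proof (rule compact_imp_fip_image)
    fix G' assume G': "finite G'" "G' \<subseteq> Gr"
    define G where "G = insert (x0, u0) G'"
    have "finite G" "G \<noteq> {}" using G' by (auto simp: G_def)
    moreover have "snd g \<in> T (fst g)" if "g \<in> G" for g
      using that G' u0 by (auto simp: G_def Gr_def)
    then have "0 \<le> (fst g - fst j) \<bullet> (snd g - snd j)" if "g \<in> G" "j \<in> G" for g j
      using that mT unfolding monotone_op_def by blast
    ultimately obtain w where "\<forall>g\<in>G. 0 \<le> (w - fst g) \<bullet> (\<phi> w - snd g)"
      using debrunner_flor_finite continuous_on_subset[OF cont] by blast
    then show "K (x0, u0) \<inter> (\<Inter>g\<in>G'. K g) \<noteq> {}" by (auto simp: K_def G_def)
  qed (rule closed_K)
  then obtain w where "\<And>g. g \<in> Gr \<Longrightarrow> w \<in> K g" by blast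
  then have "\<phi> w \<in> T w"
    by (intro maximal_monotone_memI[OF mm]) (auto simp: K_def Gr_def)
  then show ?thesis ..
qed

lemma one_plus_divide_le_inverse_one_minus_sqrt:
  fixes s k :: real
  assumes "0 < s" "0 < k"
  shows "0 < 1 - sqrt (k\<^sup>2 / (s\<^sup>2 + k\<^sup>2))"
    and "1 + k / s \<le> 1 / (1 - sqrt (k\<^sup>2 / (s\<^sup>2 + k\<^sup>2)))"
proof -
  define q where "q = sqrt (s\<^sup>2 + k\<^sup>2)"
  have sqrt_eq: "sqrt (k\<^sup>2 / (s\<^sup>2 + k\<^sup>2)) = k / q"
    using assms by (simp add: q_def real_sqrt_divide)
  have "sqrt (k\<^sup>2) < q" unfolding q_def using assms by (intro real_sqrt_less_mono) simp
  then have k_less: "k < q" using assms by simp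
  have "q \<le> sqrt ((s + k)\<^sup>2)"
    unfolding q_def using assms by (intro real_sqrt_le_mono) (simp add: power2_sum)
  then have "q \<le> s + k" using assms by simp
  then have "k * q \<le> k * (s + k)" using assms by (simp add: mult_left_mono)
  then have "(s + k) * (q - k) \<le> q * s" by (simp add: algebra_simps)
  then have "1 + k / s \<le> q / (q - k)" using assms k_less by (simp add: field_simps)
  then show "0 < 1 - sqrt (k\<^sup>2 / (s\<^sup>2 + k\<^sup>2))"
    and "1 + k / s \<le> 1 / (1 - sqrt (k\<^sup>2 / (s\<^sup>2 + k\<^sup>2)))"
    using k_less assms unfolding sqrt_eq by (simp_all add: field_simps)
qed

lemma IGPPAstep_outE:
  assumes "IGPPAstep_out T z \<sigma> \<eta> \<delta> \<gamma> M z'"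
  obtains w where "z' = z + \<gamma> *\<^sub>R (w - z)"
    and "normM M (w - resolventM \<sigma> M T z) \<le> \<eta>"
    and "normM M (w - resolventM \<sigma> M T z) \<le> \<delta> * normM M (w - z)"
  using assms unfolding IGPPAstep_out_def by (auto simp: algebra_simps)

locale spd_operator =
  fixes M :: "'a::real_inner \<Rightarrow> 'a"
  assumes M_linear: "linear M" and M_self_adjoint: "self_adjoint M" and M_pos_def: "pos_def M"
begin

lemma inner_M_commute: "x \<bullet> M y = y \<bullet> M x"
  using M_self_adjoint unfolding self_adjoint_def by (metis inner_commute)

lemma inner_M_nonneg: "0 \<le> x \<bullet> M x"
  using M_pos_def linear_0[OF M_linear] unfolding pos_def_def
  by (cases "x = 0") (auto intro: less_imp_le)

lemma normM_nonneg: "0 \<le> normM M x"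
  using inner_M_nonneg by (simp add: normM_def)

lemma normM_power2: "(normM M x)\<^sup>2 = x \<bullet> M x"
  using inner_M_nonneg by (simp add: normM_def)

lemma normM_scaleR: "normM M (c *\<^sub>R x) = \<bar>c\<bar> * normM M x"
proof -
  have "(c *\<^sub>R x) \<bullet> M (c *\<^sub>R x) = c\<^sup>2 * (x \<bullet> M x)"
    using M_linear by (simp add: linear_scale power2_eq_square)
  then show ?thesis by (simp add: normM_def real_sqrt_mult)
qed

lemma normM_minus_commute: "normM M (x - y) = normM M (y - x)"
  using normM_scaleR[of "-1" "x - y"] by simp

lemma inner_M_Cauchy_Schwarz: "\<bar>x \<bullet> M y\<bar> \<le> normM M x * normM M y"
proof -
  define a b c where "a = x \<bullet> M x" and "b = x \<bullet> M y" and "c = y \<bullet> M y"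
  have quadratic: "0 \<le> a + 2 * t * b + t\<^sup>2 * c" for t
  proof -
    have "0 \<le> (x + t *\<^sub>R y) \<bullet> M (x + t *\<^sub>R y)" by (rule inner_M_nonneg)
    also have "\<dots> = a + 2 * t * b + t\<^sup>2 * c"
      using inner_M_commute[of y x] M_linear
      by (simp add: a_def b_def c_def linear_add linear_scale inner_add_left inner_add_right
          power2_eq_square algebra_simps)
    finally show ?thesis .
  qed
  have "b\<^sup>2 \<le> a * c"
  proof (cases "c = 0")
    case True
    then have "y = 0" using M_pos_def unfolding pos_def_def c_def by force
    then show ?thesis using M_linear True by (simp add: b_def linear_0)
  next
    case False
    then have "0 < c" using inner_M_nonneg[of y] by (simp add: c_def)
    have "0 \<le> a + 2 * (- b / c) * b + (- b / c)\<^sup>2 * c" by (rule quadratic)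
    also have "\<dots> = a - b\<^sup>2 / c" using \<open>0 < c\<close> by (simp add: power2_eq_square field_simps)
    finally show ?thesis using \<open>0 < c\<close> by (simp add: field_simps)
  qed
  then have "sqrt (b\<^sup>2) \<le> sqrt (a * c)" by (rule real_sqrt_le_mono)
  then show ?thesis by (simp add: normM_def a_def b_def c_def real_sqrt_mult)
qed

lemma normM_triangle_ineq: "normM M (x + y) \<le> normM M x + normM M y"
proof -
  have "(normM M (x + y))\<^sup>2 = x \<bullet> M x + 2 * (x \<bullet> M y) + y \<bullet> M y"
    using inner_M_commute[of y x] M_linear
    by (simp add: normM_power2 linear_add inner_add_left inner_add_right)
  also have "\<dots> \<le> (normM M x)\<^sup>2 + 2 * (normM M x * normM M y) + (normM M y)\<^sup>2"
    using inner_M_Cauchy_Schwarz[of x y] by (simp add: normM_power2)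
  also have "\<dots> = (normM M x + normM M y)\<^sup>2" by (simp add: power2_sum)
  finally show ?thesis
    using normM_nonneg by (meson add_nonneg_nonneg power2_le_imp_le)
qed

lemma normM_triangle_diff: "normM M (x - z) \<le> normM M (x - y) + normM M (y - z)"
  using normM_triangle_ineq[of "x - y" "y - z"] by simp

lemma normM_le_of_inner_nonneg:
  assumes "0 \<le> (J - p) \<bullet> M (z - J)"
  shows "normM M (z - J) \<le> normM M (z - p)"
proof -
  have "(z - p) \<bullet> M (z - J) = (z - J) \<bullet> M (z - J) + (J - p) \<bullet> M (z - J)"
    by (simp add: inner_diff_left)
  then have "(normM M (z - J))\<^sup>2 \<le> (z - p) \<bullet> M (z - J)"
    using assms by (simp add: normM_power2)
  also have "\<dots> \<le> normM M (z - p) * normM M (z - J)"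
    using inner_M_Cauchy_Schwarz[of "z - p" "z - J"] by linarith
  finally have "normM M (z - J) * normM M (z - J) \<le> normM M (z - p) * normM M (z - J)"
    by (simp add: power2_eq_square)
  then show ?thesis
    using normM_nonneg[of "z - J"] normM_nonneg[of "z - p"]
    by (cases "normM M (z - J) = 0") (auto intro: mult_right_le_imp_le)
qed

lemma normM_relaxed_le_of_inner_nonneg:
  assumes "0 \<le> (J - p) \<bullet> M (z - J)" and g: "0 \<le> g" "g \<le> 2"
  shows "normM M (z + g *\<^sub>R (J - z) - p) \<le> normM M (z - p)"
proof -
  define a b where "a = z - p" and "b = z - J"
  have "a \<bullet> M b = b \<bullet> M b + (J - p) \<bullet> M (z - J)"
    by (simp add: a_def b_def inner_diff_left)
  then have "b \<bullet> M b \<le> a \<bullet> M b" using assms(1) by simp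
  then have "g\<^sup>2 * (b \<bullet> M b) - 2 * g * (a \<bullet> M b) \<le> g\<^sup>2 * (b \<bullet> M b) - 2 * g * (b \<bullet> M b)"
    using g by (simp add: mult_left_mono)
  also have "\<dots> = g * (g - 2) * (b \<bullet> M b)" by (simp add: power2_eq_square algebra_simps)
  also have "\<dots> \<le> 0"
    using g inner_M_nonneg[of b] by (simp add: mult_nonpos_nonneg mult_nonneg_nonpos)
  finally have "g\<^sup>2 * (b \<bullet> M b) - 2 * g * (a \<bullet> M b) \<le> 0" .
  moreover have "(a - g *\<^sub>R b) \<bullet> M (a - g *\<^sub>R b) = a \<bullet> M a - 2 * g * (a \<bullet> M b) + g\<^sup>2 * (b \<bullet> M b)"
    using M_linear inner_M_commute[of b a]
    by (simp add: linear_diff linear_scale inner_diff_left inner_diff_right power2_eq_square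
        algebra_simps)
  ultimately have "(normM M (a - g *\<^sub>R b))\<^sup>2 \<le> (normM M a)\<^sup>2"
    unfolding normM_power2 by linarith
  then have "normM M (a - g *\<^sub>R b) \<le> normM M a"
    using normM_nonneg by (rule power2_le_imp_le)
  moreover have "z + g *\<^sub>R (J - z) - p = a - g *\<^sub>R b" by (simp add: a_def b_def algebra_simps)
  ultimately show ?thesis by (simp only: a_def)
qed

lemma resolvent_equation_unique:
  assumes mT: "monotone_op T" and "0 \<le> \<sigma>"
    and "v1 \<in> T w1" "M (z - w1) = \<sigma> *\<^sub>R v1" "v2 \<in> T w2" "M (z - w2) = \<sigma> *\<^sub>R v2"
  shows "w1 = w2"
proof (rule ccontr)
  assume "w1 \<noteq> w2"
  have "M (w1 - w2) = \<sigma> *\<^sub>R v2 - \<sigma> *\<^sub>R v1"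
    using linear_diff[OF M_linear, of "z - w2" "z - w1"] assms(4,6) by simp
  then have "(w1 - w2) \<bullet> M (w1 - w2) = (w1 - w2) \<bullet> (\<sigma> *\<^sub>R v2 - \<sigma> *\<^sub>R v1)"
    by simp
  also have "\<dots> = - (\<sigma> * ((w1 - w2) \<bullet> (v1 - v2)))"
    by (simp add: inner_diff_right algebra_simps)
  also have "\<dots> \<le> 0"
    using mT assms(2,3,5) unfolding monotone_op_def by simp
  finally show False
    using \<open>w1 \<noteq> w2\<close> M_pos_def by (simp add: pos_def_def not_le[symmetric])
qed

end

locale spd_operator_euclidean = spd_operator M for M :: "'a::euclidean_space \<Rightarrow> 'a"
begin

lemma bounded_linear_M: "bounded_linear M"
  using M_linear by (simp add: linear_conv_bounded_linear)

lemma inner_M_sgn: "x \<bullet> M x = (norm x)\<^sup>2 * (sgn x \<bullet> M (sgn x))"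
  using M_linear
  by (cases "x = 0") (simp_all add: sgn_div_norm linear_scale linear_0 power2_eq_square field_simps)

lemma bdd_above_Rayleigh: "bdd_above {x \<bullet> M x | x. norm x = 1}"
proof -
  obtain B where B: "\<And>x. norm (M x) \<le> norm x * B"
    using bounded_linear.bounded[OF bounded_linear_M] by blast
  have "x \<bullet> M x \<le> B" if "norm x = 1" for x
    using norm_cauchy_schwarz[of x "M x"] B[of x] that by simp
  then show ?thesis unfolding bdd_above_def by blast
qed

lemma inner_M_le_lambda_max: "x \<bullet> M x \<le> lambda_max M * (norm x)\<^sup>2"
proof (cases "x = 0")
  case False
  then have "sgn x \<bullet> M (sgn x) \<le> lambda_max M"
    unfolding lambda_max_def by (intro cSup_upper bdd_above_Rayleigh) (auto simp: norm_sgn)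
  then have "(norm x)\<^sup>2 * (sgn x \<bullet> M (sgn x)) \<le> (norm x)\<^sup>2 * lambda_max M"
    by (rule mult_left_mono) simp
  then show ?thesis by (metis inner_M_sgn mult.commute)
qed (simp add: linear_0[OF M_linear])

lemma lambda_min_le_inner_M: "lambda_min M * (norm x)\<^sup>2 \<le> x \<bullet> M x"
proof (cases "x = 0")
  case False
  have "bdd_below {x \<bullet> M x | x. norm x = 1}"
    unfolding bdd_below_def using inner_M_nonneg by blast
  then have "lambda_min M \<le> sgn x \<bullet> M (sgn x)"
    unfolding lambda_min_def using False by (intro cInf_lower) (auto simp: norm_sgn)
  then have "(norm x)\<^sup>2 * lambda_min M \<le> (norm x)\<^sup>2 * (sgn x \<bullet> M (sgn x))"
    by (rule mult_left_mono) simp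
  then show ?thesis by (metis inner_M_sgn mult.commute)
qed (simp add: linear_0[OF M_linear])

lemma lambda_min_pos: "0 < lambda_min M"
proof -
  have cont: "continuous_on (sphere 0 1) (\<lambda>x. x \<bullet> M x)"
    by (intro continuous_intros bounded_linear.continuous_on[OF bounded_linear_M])
  have ne: "sphere (0::'a) 1 \<noteq> {}"
    using norm_Basis[OF SOME_Basis] by (auto simp: dist_norm)
  obtain x0 where x0: "x0 \<in> sphere 0 1" "\<And>y. y \<in> sphere 0 1 \<Longrightarrow> x0 \<bullet> M x0 \<le> y \<bullet> M y"
    using continuous_attains_inf[OF compact_sphere ne cont] by blast
  have "x0 \<noteq> 0" using x0(1) by auto
  then have "0 < x0 \<bullet> M x0" using M_pos_def by (simp add: pos_def_def)
  also have "x0 \<bullet> M x0 \<le> lambda_min M"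
    unfolding lambda_min_def using ne x0 by (intro cInf_greatest) (auto simp: dist_norm)
  finally show ?thesis .
qed

lemma lambda_min_le_lambda_max: "lambda_min M \<le> lambda_max M"
  using lambda_min_le_inner_M[of "SOME i. i \<in> Basis"] inner_M_le_lambda_max[of "SOME i. i \<in> Basis"]
  by (simp add: norm_Basis[OF SOME_Basis])

lemma normM_le_norm:
  assumes "lambda_max M = 1"
  shows "normM M x \<le> norm x"
  using real_sqrt_le_mono[OF inner_M_le_lambda_max[of x]] assms by (simp add: normM_def)

lemma norm_M_le_normM:
  assumes "lambda_max M = 1"
  shows "norm (M x) \<le> normM M x"
proof -
  have "(norm (M x))\<^sup>2 = x \<bullet> M (M x)"
    using inner_M_commute[of x "M x"] by (simp add: power2_norm_eq_inner)
  also have "\<dots> \<le> normM M x * normM M (M x)"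
    using inner_M_Cauchy_Schwarz[of x "M x"] by linarith
  also have "\<dots> \<le> normM M x * norm (M x)"
    by (intro mult_left_mono normM_le_norm[OF assms] normM_nonneg)
  finally show ?thesis
    using normM_nonneg[of x] by (cases "M x = 0") (auto simp: power2_eq_square)
qed

lemma lambda_min_norm_le_normM:
  assumes "lambda_max M = 1"
  shows "lambda_min M * norm x \<le> normM M x"
proof -
  have "(lambda_min M * norm x)\<^sup>2 = lambda_min M * (lambda_min M * (norm x)\<^sup>2)"
    by (simp add: power2_eq_square)
  also have "\<dots> \<le> lambda_min M * (norm x)\<^sup>2"
    using lambda_min_pos lambda_min_le_lambda_max assms by (intro mult_left_le_one_le) auto
  also have "\<dots> \<le> (normM M x)\<^sup>2"
    using lambda_min_le_inner_M by (simp add: normM_power2)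
  finally show ?thesis using normM_nonneg by (rule power2_le_imp_le)
qed

lemma resolvent_equation_exists:
  assumes mm: "maximal_monotone T" and \<sigma>: "0 < \<sigma>"
  shows "\<exists>w. \<exists>v\<in>T w. M (z - w) = \<sigma> *\<^sub>R v"
proof -
  obtain x0 u0 where u0: "u0 \<in> T x0" using maximal_monotone_graph_nonempty[OF mm] by blast
  define \<phi> where "\<phi> w = (1 / \<sigma>) *\<^sub>R M (z - w)" for w
  define c where "c = norm (M (z - x0) - \<sigma> *\<^sub>R u0) / lambda_min M"
  have "continuous_on UNIV \<phi>"
    unfolding \<phi>_def by (intro continuous_intros bounded_linear.continuous_on[OF bounded_linear_M])
  moreover have "{w. 0 \<le> (w - x0) \<bullet> (\<phi> w - u0)} \<subseteq> cball x0 c"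
  proof
    fix w assume "w \<in> {w. 0 \<le> (w - x0) \<bullet> (\<phi> w - u0)}"
    then have "0 \<le> (w - x0) \<bullet> (\<sigma> *\<^sub>R (\<phi> w - u0))" using \<sigma> by simp
    also have "\<sigma> *\<^sub>R (\<phi> w - u0) = M (z - x0) - \<sigma> *\<^sub>R u0 - M (w - x0)"
      using \<sigma> linear_diff[OF M_linear, of "z - x0" "w - x0"]
      by (simp add: \<phi>_def scaleR_diff_right algebra_simps)
    finally have "(w - x0) \<bullet> M (w - x0) \<le> (w - x0) \<bullet> (M (z - x0) - \<sigma> *\<^sub>R u0)"
      by (simp add: inner_diff_right)
    also have "\<dots> \<le> norm (w - x0) * norm (M (z - x0) - \<sigma> *\<^sub>R u0)"
      by (rule norm_cauchy_schwarz)
    finally have "lambda_min M * (norm (w - x0))\<^sup>2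
        \<le> norm (w - x0) * norm (M (z - x0) - \<sigma> *\<^sub>R u0)"
      using lambda_min_le_inner_M[of "w - x0"] by linarith
    then have "norm (w - x0) * (lambda_min M * norm (w - x0))
        \<le> norm (w - x0) * norm (M (z - x0) - \<sigma> *\<^sub>R u0)"
      by (simp add: power2_eq_square mult_ac)
    then have "lambda_min M * norm (w - x0) \<le> norm (M (z - x0) - \<sigma> *\<^sub>R u0)"
      by (cases "w = x0") (simp_all add: mult_le_cancel_left_pos)
    then show "w \<in> cball x0 c"
      using lambda_min_pos by (simp add: c_def dist_norm norm_minus_commute field_simps)
  qed
  then have "bounded {w. 0 \<le> (w - x0) \<bullet> (\<phi> w - u0)}"
    by (rule bounded_subset[OF bounded_cball])
  ultimately obtain w where "\<phi> w \<in> T w"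
    using maximal_monotone_meets_continuous[OF mm _ u0] by blast
  moreover have "M (z - w) = \<sigma> *\<^sub>R \<phi> w" using \<sigma> by (simp add: \<phi>_def)
  ultimately show ?thesis by blast
qed

lemma resolventM_in_T:
  assumes mm: "maximal_monotone T" and \<sigma>: "0 < \<sigma>"
  obtains v where "v \<in> T (resolventM \<sigma> M T z)" "M (z - resolventM \<sigma> M T z) = \<sigma> *\<^sub>R v"
proof -
  have mT: "monotone_op T" using mm by (simp add: maximal_monotone_def)
  have "\<exists>!w. M (z - w) \<in> (\<lambda>v. \<sigma> *\<^sub>R v) ` T w"
  proof (rule ex_ex1I)
    show "\<exists>w. M (z - w) \<in> (\<lambda>v. \<sigma> *\<^sub>R v) ` T w"
      using resolvent_equation_exists[OF mm \<sigma>, of z] by blast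
  next
    fix w1 w2
    assume "M (z - w1) \<in> (\<lambda>v. \<sigma> *\<^sub>R v) ` T w1" "M (z - w2) \<in> (\<lambda>v. \<sigma> *\<^sub>R v) ` T w2"
    then obtain v1 v2 where "v1 \<in> T w1" "M (z - w1) = \<sigma> *\<^sub>R v1" "v2 \<in> T w2" "M (z - w2) = \<sigma> *\<^sub>R v2"
      by blast
    then show "w1 = w2" by (rule resolvent_equation_unique[OF mT less_imp_le[OF \<sigma>]])
  qed
  then have "M (z - resolventM \<sigma> M T z) \<in> (\<lambda>v. \<sigma> *\<^sub>R v) ` T (resolventM \<sigma> M T z)"
    unfolding resolventM_def by (rule theI')
  then show ?thesis using that by blast
qed

lemma resolventM_inner_nonneg:
  assumes mm: "maximal_monotone T" and \<sigma>: "0 < \<sigma>" and p: "0 \<in> T p"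
  shows "0 \<le> (resolventM \<sigma> M T z - p) \<bullet> M (z - resolventM \<sigma> M T z)"
proof -
  obtain v where v: "v \<in> T (resolventM \<sigma> M T z)" "M (z - resolventM \<sigma> M T z) = \<sigma> *\<^sub>R v"
    by (rule resolventM_in_T[OF mm \<sigma>])
  have "0 \<le> (resolventM \<sigma> M T z - p) \<bullet> (v - 0)"
    using mm v(1) p unfolding maximal_monotone_def monotone_op_def by blast
  then show ?thesis using v(2) \<sigma> by simp
qed

lemma normM_resolventM_le_distM:
  assumes mm: "maximal_monotone T" and \<sigma>: "0 < \<sigma>" and \<Omega>: "{x. 0 \<in> T x} \<noteq> {}"
  shows "normM M (z - resolventM \<sigma> M T z) \<le> distM M z {x. 0 \<in> T x}"
  unfolding distM_def
proof (rule cInf_greatest)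
  show "{normM M (d - z) |d. d \<in> {x. 0 \<in> T x}} \<noteq> {}" using \<Omega> by blast
next
  fix x assume "x \<in> {normM M (d - z) |d. d \<in> {x. 0 \<in> T x}}"
  then obtain p where p: "0 \<in> T p" "x = normM M (p - z)" by blast
  show "normM M (z - resolventM \<sigma> M T z) \<le> x"
    using normM_le_of_inner_nonneg[OF resolventM_inner_nonneg[OF mm \<sigma> p(1)]]
      normM_minus_commute[of p z] p(2) by simp
qed

lemma distM_le_resolventM_residual:
  assumes mm: "maximal_monotone T" and \<sigma>: "0 < \<sigma>" and M_max: "lambda_max M = 1"
    and \<Omega>: "{x. 0 \<in> T x} \<noteq> {}" and \<kappa>: "0 \<le> \<kappa>" "subreg_bound T r \<kappa>"
    and J_bound: "norm (resolventM \<sigma> M T z) \<le> r"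
  shows "distM M z {x. 0 \<in> T x} \<le> (1 + \<kappa> / \<sigma>) * normM M (z - resolventM \<sigma> M T z)"
proof -
  define J where "J = resolventM \<sigma> M T z"
  obtain v where v: "v \<in> T J" "M (z - J) = \<sigma> *\<^sub>R v"
    unfolding J_def by (rule resolventM_in_T[OF mm \<sigma>])
  obtain p where p: "0 \<in> T p" "infdist J {x. 0 \<in> T x} = dist J p"
    using infdist_attains_inf[OF closed_zeros_maximal_monotone[OF mm] \<Omega>] by blast
  have "norm v = norm (M (z - J)) / \<sigma>" using v(2) \<sigma> by simp
  also have "\<dots> \<le> normM M (z - J) / \<sigma>"
    using norm_M_le_normM[OF M_max] \<sigma> by (simp add: divide_right_mono)
  finally have v_le: "norm v \<le> normM M (z - J) / \<sigma>" .
  have "normM M (J - p) \<le> norm (J - p)" by (rule normM_le_norm[OF M_max])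
  also have "\<dots> \<le> \<kappa> * infdist 0 (T J)"
    using \<kappa>(2) J_bound v(1) p(2) unfolding subreg_bound_def J_def by (auto simp: dist_norm)
  also have "\<dots> \<le> \<kappa> * norm v"
    using infdist_le[OF v(1), of 0] \<kappa>(1) by (simp add: mult_left_mono)
  also have "\<dots> \<le> \<kappa> / \<sigma> * normM M (z - J)"
    using mult_left_mono[OF v_le \<kappa>(1)] by simp
  finally have p_near: "normM M (J - p) \<le> \<kappa> / \<sigma> * normM M (z - J)" .
  have "distM M z {x. 0 \<in> T x} \<le> normM M (p - z)"
    unfolding distM_def using p(1) normM_nonneg by (intro cInf_lower) (auto simp: bdd_below_def)
  also have "\<dots> \<le> normM M (p - J) + normM M (J - z)" by (rule normM_triangle_diff)
  also have "\<dots> \<le> (1 + \<kappa> / \<sigma>) * normM M (z - J)"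
    using p_near normM_minus_commute[of p J] normM_minus_commute[of J z] by (simp add: algebra_simps)
  finally show ?thesis unfolding J_def .
qed

lemma IGPPAstep_out_lower_bound:
  assumes step: "IGPPAstep_out T z \<sigma> \<eta> \<delta> \<gamma> M z'"
    and mm: "maximal_monotone T" and \<sigma>: "0 < \<sigma>" and \<gamma>: "0 < \<gamma>"
    and \<Omega>: "{x. 0 \<in> T x} \<noteq> {}"
  shows "(1 - \<delta>) / \<gamma> * normM M (z' - z) \<le> distM M z {x. 0 \<in> T x}"
proof -
  define J where "J = resolventM \<sigma> M T z"
  obtain w where w: "z' = z + \<gamma> *\<^sub>R (w - z)" "normM M (w - J) \<le> \<delta> * normM M (w - z)"
    using step unfolding J_def by (rule IGPPAstep_outE)
  have "normM M (w - z) \<le> normM M (w - J) + normM M (J - z)" by (rule normM_triangle_diff)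
  then have "(1 - \<delta>) * normM M (w - z) \<le> normM M (z - J)"
    using w(2) normM_minus_commute[of J z] by (simp add: algebra_simps)
  also have "\<dots> \<le> distM M z {x. 0 \<in> T x}"
    unfolding J_def by (rule normM_resolventM_le_distM[OF mm \<sigma> \<Omega>])
  finally show ?thesis using w(1) normM_scaleR[of \<gamma> "w - z"] \<gamma> by simp
qed

lemma IGPPAstep_out_upper_bound:
  assumes step: "IGPPAstep_out T z \<sigma> \<eta> \<delta> \<gamma> M z'"
    and mm: "maximal_monotone T" and \<sigma>: "0 < \<sigma>" and \<gamma>: "0 < \<gamma>"
    and M_max: "lambda_max M = 1" and \<Omega>: "{x. 0 \<in> T x} \<noteq> {}"
    and \<kappa>: "0 < \<kappa>" "subreg_bound T r \<kappa>" and J_bound: "norm (resolventM \<sigma> M T z) \<le> r"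
  shows "distM M z {x. 0 \<in> T x}
    \<le> (1 + \<delta>) / (\<gamma> * (1 - sqrt (\<kappa>\<^sup>2 / (\<sigma>\<^sup>2 + \<kappa>\<^sup>2)))) * normM M (z' - z)"
proof -
  define J where "J = resolventM \<sigma> M T z"
  define \<theta> where "\<theta> = 1 - sqrt (\<kappa>\<^sup>2 / (\<sigma>\<^sup>2 + \<kappa>\<^sup>2))"
  obtain w where w: "z' = z + \<gamma> *\<^sub>R (w - z)" "normM M (w - J) \<le> \<delta> * normM M (w - z)"
    using step unfolding J_def by (rule IGPPAstep_outE)
  have "normM M (z - J) \<le> normM M (z - w) + normM M (w - J)" by (rule normM_triangle_diff)
  then have residual: "normM M (z - J) \<le> (1 + \<delta>) * normM M (w - z)"
    using w(2) normM_minus_commute[of z w] by (simp add: algebra_simps)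
  have \<theta>: "0 < \<theta>" "1 + \<kappa> / \<sigma> \<le> 1 / \<theta>"
    using one_plus_divide_le_inverse_one_minus_sqrt[OF \<sigma> \<kappa>(1)] by (simp_all add: \<theta>_def)
  have "distM M z {x. 0 \<in> T x} \<le> (1 + \<kappa> / \<sigma>) * normM M (z - J)"
    using distM_le_resolventM_residual[OF mm \<sigma> M_max \<Omega> less_imp_le[OF \<kappa>(1)] \<kappa>(2) J_bound]
    unfolding J_def .
  also have "\<dots> \<le> 1 / \<theta> * ((1 + \<delta>) * normM M (w - z))"
    using \<theta> normM_nonneg by (intro mult_mono residual) auto
  also have "\<dots> = (1 + \<delta>) / (\<gamma> * \<theta>) * normM M (z' - z)"
    using w(1) normM_scaleR[of \<gamma> "w - z"] \<gamma> \<theta> by simp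
  finally show ?thesis unfolding \<theta>_def .
qed

lemma IGPPAstep_out_fejer:
  assumes step: "IGPPAstep_out T z \<sigma> \<eta> \<delta> \<gamma> M z'"
    and mm: "maximal_monotone T" and \<sigma>: "0 < \<sigma>" and \<gamma>: "0 \<le> \<gamma>" "\<gamma> \<le> 2" and p: "0 \<in> T p"
  shows "normM M (z' - p) \<le> normM M (z - p) + \<gamma> * \<eta>"
proof -
  define J where "J = resolventM \<sigma> M T z"
  obtain w where w: "z' = z + \<gamma> *\<^sub>R (w - z)" "normM M (w - J) \<le> \<eta>"
    using step unfolding J_def by (rule IGPPAstep_outE)
  have "z' - p = (z + \<gamma> *\<^sub>R (J - z) - p) + \<gamma> *\<^sub>R (w - J)"
    using w(1) by (simp add: algebra_simps)
  then have "normM M (z' - p) \<le> normM M (z + \<gamma> *\<^sub>R (J - z) - p) + \<gamma> * normM M (w - J)"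
    using normM_triangle_ineq normM_scaleR \<gamma>(1) by (metis abs_of_nonneg)
  also have "\<dots> \<le> normM M (z - p) + \<gamma> * \<eta>"
    using normM_relaxed_le_of_inner_nonneg[OF resolventM_inner_nonneg[OF mm \<sigma> p, of z] \<gamma>]
      mult_left_mono[OF w(2) \<gamma>(1)] unfolding J_def by linarith
  finally show ?thesis .
qed

lemma IGPPA_resolventM_norm_le:
  assumes steps: "\<And>k. IGPPAstep_out T (z k) (\<sigma> k) (\<eta> k) \<delta> \<gamma> M (z (Suc k))"
    and mm: "maximal_monotone T" and \<sigma>: "\<And>k. 0 < \<sigma> k" and \<gamma>: "0 \<le> \<gamma>" "\<gamma> \<le> 2"
    and \<eta>: "\<And>k. 0 \<le> \<eta> k" "summable \<eta>" and p: "0 \<in> T p" and M_max: "lambda_max M = 1"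
  shows "norm (resolventM (\<sigma> k) M T (z k))
    \<le> norm p + 1 / lambda_min M * (normM M (z 0 - p) + \<gamma> * suminf \<eta>)"
proof -
  define J where "J = resolventM (\<sigma> k) M T (z k)"
  have fejer: "normM M (z n - p) \<le> normM M (z 0 - p) + \<gamma> * (\<Sum>i<n. \<eta> i)" for n
  proof (induction n)
    case (Suc n)
    then show ?case
      using IGPPAstep_out_fejer[OF steps mm \<sigma> \<gamma> p, of n] by (simp add: distrib_left)
  qed simp
  have "(\<Sum>i<k. \<eta> i) \<le> suminf \<eta>"
    using \<eta> by (intro sum_le_suminf) auto
  then have "normM M (z k - p) \<le> normM M (z 0 - p) + \<gamma> * suminf \<eta>"
    using fejer[of k] mult_left_mono[OF _ \<gamma>(1)] by fastforce
  moreover have "normM M (J - p) \<le> normM M (z k - p)"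
    using normM_relaxed_le_of_inner_nonneg[OF resolventM_inner_nonneg[OF mm \<sigma>[of k] p, of "z k"], of 1]
    unfolding J_def by simp
  ultimately have "lambda_min M * norm (J - p) \<le> normM M (z 0 - p) + \<gamma> * suminf \<eta>"
    using lambda_min_norm_le_normM[OF M_max, of "J - p"] by linarith
  then have "norm (J - p) \<le> 1 / lambda_min M * (normM M (z 0 - p) + \<gamma> * suminf \<eta>)"
    using lambda_min_pos by (simp add: field_simps)
  then show ?thesis
    using norm_triangle_sub[of J p] unfolding J_def by linarith
qed

end

theorem proposition1:
  fixes T :: "'a::euclidean_space \<Rightarrow> 'a set"
    and M :: "'a \<Rightarrow> 'a"
    and z :: "nat \<Rightarrow> 'a" and \<sigma> \<eta> :: "nat \<Rightarrow> real"
    and \<gamma> \<delta> r \<kappa> :: real and zbar0 :: 'a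
  assumes T_mm: "maximal_monotone T"
    and Omega_ne: "{x. 0 \<in> T x} \<noteq> {}"
    and M_lin: "linear M" and M_sa: "self_adjoint M" and M_pd: "pos_def M"
    and M_max: "lambda_max M = 1"
    and \<gamma>: "0 < \<gamma>" "\<gamma> < 2"
    and \<delta>: "0 \<le> \<delta>" "\<delta> < 1/2"
    and \<sigma>_nn: "\<forall>k. 0 \<le> \<sigma> k" and \<eta>_nn: "\<forall>k. 0 \<le> \<eta> k"
    and \<eta>_sum: "summable \<eta>"
    and \<sigma>_inf: "(INF k. \<sigma> k) > 0"
    and steps: "\<forall>k. IGPPAstep_out T (z k) (\<sigma> k) (\<eta> k) \<delta> \<gamma> M (z (Suc k))"
    and subreg: "bounded_metric_subregular T"
    and zbar0: "zbar0 \<in> {x. 0 \<in> T x}"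
      "normM M (zbar0 - z 0) = distM M (z 0) {x. 0 \<in> T x}"
    and r: "r \<ge> norm zbar0 + (1 / lambda_min M) *
              (distM M (z 0) {x. 0 \<in> T x} + \<gamma> * suminf \<eta>)"
    and \<kappa>: "\<kappa> > 0" "subreg_bound T r \<kappa>"
  shows "\<forall>k. (1 - \<delta>) / \<gamma> * normM M (z (Suc k) - z k) \<le> distM M (z k) {x. 0 \<in> T x}
           \<and> distM M (z k) {x. 0 \<in> T x} \<le>
             (1 + \<delta>) / (\<gamma> * (1 - sqrt (\<kappa>\<^sup>2 / ((\<sigma> k)\<^sup>2 + \<kappa>\<^sup>2))))
               * normM M (z (Suc k) - z k)"
proof -
  interpret spd_operator_euclidean M
    using M_lin M_sa M_pd by (simp add: spd_operator_euclidean_def spd_operator_def)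
  have \<sigma>_pos: "0 < \<sigma> k" for k
  proof -
    have "(INF k. \<sigma> k) \<le> \<sigma> k"
      using \<sigma>_nn by (intro cINF_lower) (auto simp: bdd_below_def)
    then show ?thesis using \<sigma>_inf by linarith
  qed
  have \<gamma>_le: "0 \<le> \<gamma>" "\<gamma> \<le> 2" using \<gamma> by simp_all
  have J_bound: "norm (resolventM (\<sigma> k) M T (z k)) \<le> r" for k
  proof -
    have "norm (resolventM (\<sigma> k) M T (z k))
        \<le> norm zbar0 + 1 / lambda_min M * (normM M (z 0 - zbar0) + \<gamma> * suminf \<eta>)"
      using zbar0(1) by (intro IGPPA_resolventM_norm_le[where z = z and \<sigma> = \<sigma> and \<eta> = \<eta>,
          OF steps[rule_format] T_mm \<sigma>_pos \<gamma>_le \<eta>_nn[rule_format] \<eta>_sum _ M_max]) simp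
    also have "\<dots> = norm zbar0 + 1 / lambda_min M * (distM M (z 0) {x. 0 \<in> T x} + \<gamma> * suminf \<eta>)"
      using zbar0(2) normM_minus_commute[of "z 0" zbar0] by simp
    also have "\<dots> \<le> r" by (rule r)
    finally show ?thesis .
  qed
  show ?thesis
    by (intro allI conjI
        IGPPAstep_out_lower_bound[OF steps[rule_format] T_mm \<sigma>_pos \<gamma>(1) Omega_ne]
        IGPPAstep_out_upper_bound[OF steps[rule_format] T_mm \<sigma>_pos \<gamma>(1) M_max Omega_ne \<kappa> J_bound])
qed

end
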